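(* Let $n\ge2$ (prime or composite), $\alpha>1$, $s\ge1$, let $\{\beta_u\}_{u\subseteq\{1:s\}}$ be any family of nonnegative reals, and let $(z_1,\ldots,z_{s-1})\in\mathbb U_n^{s-1}$. Then for all $\lambda\in(\frac1\alpha,1]$, $$\frac1{\varphi(n)}\sum_{z_s\in\mathbb U_n}\big[\theta_{n,s,\alpha}(z_1,\ldots,z_s;\{\beta_u\}_{u\subseteq\{1:s\}})\big]^\lambda\le\frac{\kappa}{\varphi(n)}\Bigg(\sum_{s\in u\subseteq\{1:s\}}\beta_u^\lambda[2\zeta(\alpha\lambda)]^{|u|}\Bigg)\Bigg(\sum_{u\subseteq\{1:s\}}\beta_u^\lambda[2\zeta(\alpha\lambda)]^{|u|}\Bigg),$$ where $\kappa=2^{2\alpha\lambda+1}+1$.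
   Context: $\{1:s\}=\{1,\ldots,s\}$; $\zeta$ is the Riemann zeta function. $\mathbb U_n=\{z\in\mathbb Z:1\le z\le n-1,\gcd(z,n)=1\}$ and $\varphi(n)=|\mathbb U_n|$. For $\mathbf h\in\mathbb Z^s$, $\mathrm{supp}(\mathbf h)=\{j:h_j\ne0\}$ and $r'(\mathbf h)=\prod_{j\in\mathrm{supp}(\mathbf h)}|h_j|^\alpha$. Define $$\theta_{n,s,\alpha}(z_1,\ldots,z_s;\{\beta_u\})=\sum_{\mathbf h\in\mathbb Z^s}\sum_{\substack{\boldsymbol\ell\in\mathbb Z^s,\ \ell_s\ne0\\ \boldsymbol\ell\cdot(z_1,\ldots,z_s)\equiv0\ (\mathrm{mod}\ n)}}\frac{\beta_{\mathrm{supp}(\mathbf h)}}{r'(\mathbf h)}\frac{\beta_{\mathrm{supp}(\mathbf h+\boldsymbol\ell)}}{r'(\mathbf h+\boldsymbol\ell)}.$$ *)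

theory Defs
  imports "HOL-Analysis.Analysis" "HOL-Number_Theory.Number_Theory"
begin

definition zvecs :: "nat \<Rightarrow> (nat \<Rightarrow> int) set" where
  "zvecs s = {h. \<forall>j. j \<notin> {1..s} \<longrightarrow> h j = 0}"

definition Un_set :: "nat \<Rightarrow> int set" where
  "Un_set n = {z. 1 \<le> z \<and> z \<le> int n - 1 \<and> coprime z (int n)}"

definition supp_vec :: "nat \<Rightarrow> (nat \<Rightarrow> int) \<Rightarrow> nat set" where
  "supp_vec s h = {j \<in> {1..s}. h j \<noteq> 0}"

definition rprime :: "nat \<Rightarrow> real \<Rightarrow> (nat \<Rightarrow> int) \<Rightarrow> real" where
  "rprime s \<alpha> h = (\<Prod>j\<in>supp_vec s h. \<bar>real_of_int (h j)\<bar> powr \<alpha>)"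

definition zeta_real :: "real \<Rightarrow> real" where
  "zeta_real x = (\<Sum>k. 1 / (real (Suc k)) powr x)"

definition theta :: "nat \<Rightarrow> nat \<Rightarrow> real \<Rightarrow> (nat \<Rightarrow> int) \<Rightarrow> (nat set \<Rightarrow> real) \<Rightarrow> real" where
  "theta n s \<alpha> z \<beta> =
     (\<Sum>\<^sub>\<infinity>(h, l) \<in> {(h, l). h \<in> zvecs s \<and> l \<in> zvecs s \<and> l s \<noteq> 0 \<and>
                          (\<Sum>j=1..s. l j * z j) mod int n = 0}.
        (\<beta> (supp_vec s h) / rprime s \<alpha> h) *
        (\<beta> (supp_vec s (\<lambda>j. h j + l j)) / rprime s \<alpha> (\<lambda>j. h j + l j)))"

end

theory Submission
  imports Defs
begin

text \<open>
  Since \<open>t \<mapsto> t\<^sup>\<lambda>\<close> is subadditive for \<open>\<lambda> \<le> 1\<close>, \<open>\<theta>\<^sup>\<lambda>\<close> is at most the sum over pairs \<open>(h, k = h + l)\<close>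
  of \<open>w(h) w(k)\<close>, where \<open>w(h) = \<beta>\<^bsub>supp h\<^esub>\<^sup>\<lambda> \<Prod>\<^bsub>j\<in>supp h\<^esub> \<bar>h\<^sub>j\<bar>\<^sup>-\<^sup>p\<close> and \<open>p = \<alpha>\<lambda> > 1\<close>.
  Averaging over \<open>z\<^sub>s \<in> U\<^sub>n\<close>, the pair \<open>(h, k)\<close> contributes the number of units solving
  \<open>c + (k\<^sub>s - h\<^sub>s) z\<^sub>s \<equiv> 0 (mod n)\<close>, with \<open>c\<close> depending only on the first \<open>s - 1\<close> coordinates.
  There are at most \<open>g = gcd(k\<^sub>s - h\<^sub>s, n)\<close> of them, and none unless \<open>g = gcd(c, n)\<close>; so only
  multiples \<open>k\<^sub>s - h\<^sub>s = g t\<close> of a fixed \<open>g\<close> count, and \<open>g \<bar>g t\<bar>\<^sup>-\<^sup>p \<le> \<bar>t\<bar>\<^sup>-\<^sup>p\<close> leaves a weight summing to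
  at most \<open>2 \<zeta>(p)\<close>. In the last coordinate the inequality
  \<open>\<bar>x\<bar>\<^sup>-\<^sup>p \<bar>y\<bar>\<^sup>-\<^sup>p \<le> 2\<^sup>p \<bar>y - x\<bar>\<^sup>-\<^sup>p (\<bar>x\<bar>\<^sup>-\<^sup>p + \<bar>y\<bar>\<^sup>-\<^sup>p)\<close> decouples \<open>x\<close> from \<open>y\<close>, and every other
  coordinate contributes a factor \<open>2 \<zeta>(p)\<close> per element of the support, producing the sums over \<open>u\<close>.
\<close>

lemma powr_add_le:
  fixes a b q :: real
  assumes "a \<ge> 0" "b \<ge> 0" "0 < q" "q \<le> 1"
  shows "(a + b) powr q \<le> a powr q + b powr q"
proof (cases "a + b = 0")
  case False
  define S where "S = a + b"
  have S: "S > 0" using False assms unfolding S_def by simp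
  have frac_le: "S powr q * (x / S) \<le> x powr q" if "0 \<le> x" "x \<le> S" for x
  proof -
    have "(x / S) powr 1 \<le> (x / S) powr q"
      using that S assms by (intro powr_mono') (auto simp: divide_le_eq)
    then have "x / S \<le> (x / S) powr q" using that S by simp
    then have "S powr q * (x / S) \<le> S powr q * (x / S) powr q" by (rule mult_left_mono) simp
    also have "\<dots> = x powr q" using S by (simp flip: powr_mult)
    finally show ?thesis .
  qed
  have "S powr q = S powr q * (a / S) + S powr q * (b / S)"
    using S by (simp add: S_def add_divide_distrib[symmetric] flip: distrib_left)
  also have "\<dots> \<le> a powr q + b powr q"
    using frac_le[of a] frac_le[of b] assms unfolding S_def by (intro add_mono) auto
  finally show ?thesis unfolding S_def .
qed (use assms in simp)

lemma powr_sum_le: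
  fixes f :: "'a \<Rightarrow> real"
  assumes "\<And>x. x \<in> F \<Longrightarrow> f x \<ge> 0" "0 < q" "q \<le> 1"
  shows "(\<Sum>x\<in>F. f x) powr q \<le> (\<Sum>x\<in>F. f x powr q)"
  using assms
proof (induction F rule: infinite_finite_induct)
  case (insert y F)
  have "(f y + (\<Sum>x\<in>F. f x)) powr q \<le> f y powr q + (\<Sum>x\<in>F. f x) powr q"
    using insert.prems by (intro powr_add_le sum_nonneg) auto
  also have "\<dots> \<le> f y powr q + (\<Sum>x\<in>F. f x powr q)" using insert by simp
  finally show ?case using insert.hyps by simp
qed simp_all

lemma infsum_powr_le:
  fixes G :: "'a \<Rightarrow> real"
  assumes G: "\<And>x. x \<in> A \<Longrightarrow> G x \<ge> 0" and q: "0 < q" "q \<le> 1"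
    and summable: "(\<lambda>x. G x powr q) summable_on A"
  shows "infsum G A powr q \<le> infsum (\<lambda>x. G x powr q) A"
proof (cases "G summable_on A")
  case True
  define B where "B = infsum (\<lambda>x. G x powr q) A"
  have "B \<ge> 0" unfolding B_def by (rule infsum_nonneg) simp
  have "infsum G A \<le> B powr (1 / q)"
  proof (rule infsum_le_finite_sums[OF True])
    fix F assume F: "finite F" "F \<subseteq> A"
    have "(\<Sum>x\<in>F. G x) powr q \<le> B"
      using powr_sum_le[of F G q] finite_sum_le_infsum[OF summable F] F G q by (force simp: B_def)
    then have "((\<Sum>x\<in>F. G x) powr q) powr (1 / q) \<le> B powr (1 / q)"
      using q by (intro powr_mono2) auto
    then show "(\<Sum>x\<in>F. G x) \<le> B powr (1 / q)"
      using q F G sum_nonneg[of F G] by (auto simp: powr_powr)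
  qed
  then have "infsum G A powr q \<le> (B powr (1 / q)) powr q"
    using q infsum_nonneg[of A G] G by (intro powr_mono2) auto
  also have "\<dots> = B" using q \<open>B \<ge> 0\<close> by (simp add: powr_powr)
  finally show ?thesis unfolding B_def .
qed (simp add: infsum_not_exists infsum_nonneg)

lemma finite_Un_set: "finite (Un_set n)"
  unfolding Un_set_def by (rule finite_subset[of _ "{1..int n - 1}"]) auto

definition unit_solutions :: "nat \<Rightarrow> int \<Rightarrow> int \<Rightarrow> int set" where
  "unit_solutions n c l = {zs \<in> Un_set n. (c + l * zs) mod int n = 0}"

lemma card_unit_solutions_le_gcd:
  assumes "n > 0"
  shows "int (card (unit_solutions n c l)) \<le> gcd l (int n)"
proof -
  define d where "d = gcd l (int n)"
  define m where "m = int n div d"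
  have d_pos: "d > 0" using assms by (simp add: d_def)
  have n_eq: "int n = d * m" unfolding m_def d_def by simp
  have "0 < d * m" using n_eq assms by linarith
  then have m_pos: "m > 0" using d_pos by (simp add: zero_less_mult_iff)
  obtain l' where l_eq: "l = d * l'" unfolding d_def by (meson gcd_dvd1 dvdE)
  have "gcd l (int n) = d" by (simp add: d_def)
  then have "gcd (d * l') (d * m) = d" by (simp only: l_eq n_eq)
  then have "coprime m l'"
    using d_pos by (simp add: gcd_mult_left coprime_iff_gcd_eq_1 gcd.commute)
  \<comment> \<open>Two solutions differ by a multiple of \<open>m = n / d\<close> and lie in \<open>[1, d m)\<close>,
      so their quotients by \<open>m\<close> are distinct elements of \<open>[0, d)\<close>.\<close>
  have "inj_on (\<lambda>zs. zs div m) (unit_solutions n c l)"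
  proof (rule inj_onI)
    fix x y assume x: "x \<in> unit_solutions n c l" and y: "y \<in> unit_solutions n c l"
      and div_eq: "x div m = y div m"
    have "int n dvd (c + l * x) - (c + l * y)"
      using x y unfolding unit_solutions_def by (intro dvd_diff) (auto simp: mod_eq_0_iff_dvd)
    then have "d * m dvd d * (l' * (x - y))" using n_eq l_eq by (simp add: algebra_simps)
    then have "m dvd x - y"
      using d_pos \<open>coprime m l'\<close> by (simp add: coprime_dvd_mult_right_iff)
    then have "x mod m = y mod m" by (simp add: mod_eq_dvd_iff)
    then show "x = y" using div_eq by (metis div_mult_mod_eq)
  qed
  moreover have "(\<lambda>zs. zs div m) ` unit_solutions n c l \<subseteq> {0..<d}"
  proof
    fix q assume "q \<in> (\<lambda>zs. zs div m) ` unit_solutions n c l"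
    then obtain zs where "zs \<in> Un_set n" and q: "q = zs div m"
      unfolding unit_solutions_def by auto
    then have "1 \<le> zs" "zs < m * d" using n_eq by (auto simp: Un_set_def mult.commute)
    moreover have "m * q \<le> zs" using m_pos by (simp add: q minus_mod_eq_mult_div [symmetric])
    ultimately have "m * q < m * d" by linarith
    then have "q < d" using m_pos by (simp add: mult_less_cancel_left_pos)
    moreover have "0 \<le> q" using \<open>1 \<le> zs\<close> m_pos by (simp add: q pos_imp_zdiv_nonneg_iff)
    ultimately show "q \<in> {0..<d}" by simp
  qed
  ultimately have "card (unit_solutions n c l) \<le> card {0..<d}"
    by (intro card_inj_on_le) auto
  then show ?thesis using d_pos by (simp add: le_nat_iff flip: d_def)
qed

lemma gcd_eq_if_unit_solution:
  assumes "zs \<in> unit_solutions n c l"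
  shows "gcd l (int n) = gcd c (int n)"
proof -
  have "coprime zs (int n)" and "int n dvd c + l * zs"
    using assms by (auto simp: unit_solutions_def Un_set_def mod_eq_0_iff_dvd)
  then obtain q where c_eq: "c = q * int n + - (l * zs)"
    by (metis add_diff_cancel diff_conv_add_uminus dvdE mult.commute)
  have "gcd (int n) c = gcd (int n) (- (l * zs))"
    unfolding c_eq by (rule gcd_add_mult)
  also have "\<dots> = gcd (int n) (l * zs)" by simp
  also have "\<dots> = gcd (int n) l"
    using \<open>coprime zs (int n)\<close> by (simp add: gcd_mult_right_right_cancel coprime_commute)
  finally show ?thesis by (simp add: gcd.commute)
qed

text \<open>Vanishes at \<open>x = 0\<close>, since \<open>0 powr _ = 0\<close>.\<close>
definition inv_abs_powr :: "real \<Rightarrow> int \<Rightarrow> real" where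
  "inv_abs_powr p x = real_of_int \<bar>x\<bar> powr (- p)"

lemma inv_abs_powr_nonneg [simp]: "inv_abs_powr p x \<ge> 0"
  unfolding inv_abs_powr_def by simp

lemma inv_abs_powr_0 [simp]: "inv_abs_powr p 0 = 0"
  unfolding inv_abs_powr_def by simp

lemma inv_abs_powr_uminus [simp]: "inv_abs_powr p (- x) = inv_abs_powr p x"
  unfolding inv_abs_powr_def by simp

lemma inv_abs_powr_mult: "inv_abs_powr p (x * y) = inv_abs_powr p x * inv_abs_powr p y"
  unfolding inv_abs_powr_def by (simp add: abs_mult powr_mult)

lemma summable_zeta_real_terms:
  assumes "p > 1"
  shows "summable (\<lambda>k. 1 / real (Suc k) powr p)"
proof -
  have "summable (\<lambda>k. real k powr (- p))" using assms by (simp add: summable_real_powr_iff)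
  then have "summable (\<lambda>k. real (Suc k) powr (- p))" by (subst summable_Suc_iff)
  then show ?thesis by (simp add: powr_minus_divide)
qed

lemma zeta_real_nonneg: "p > 1 \<Longrightarrow> zeta_real p \<ge> 0"
  unfolding zeta_real_def by (rule suminf_nonneg[OF summable_zeta_real_terms]) auto

lemma sum_inv_abs_powr_nonneg_le_zeta_real:
  assumes p: "p > 1" and T: "finite T" "\<And>t. t \<in> T \<Longrightarrow> t \<ge> 0"
  shows "(\<Sum>t\<in>T. inv_abs_powr p t) \<le> zeta_real p"
proof -
  have inj: "inj_on (\<lambda>t. nat t - 1) (T - {0})"
  proof (rule inj_onI)
    fix x y assume x: "x \<in> T - {0}" and y: "y \<in> T - {0}" and "nat x - 1 = nat y - 1"
    moreover have "x > 0" "y > 0" using T(2) x y by force+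
    ultimately show "x = y" by arith
  qed
  have "(\<Sum>t\<in>T. inv_abs_powr p t) = (\<Sum>t\<in>T - {0}. inv_abs_powr p t)"
    using T by (intro sum.mono_neutral_right) auto
  also have "\<dots> = (\<Sum>t\<in>T - {0}. 1 / real (Suc (nat t - 1)) powr p)"
  proof (rule sum.cong)
    fix t assume "t \<in> T - {0}"
    then have "real (Suc (nat t - 1)) = real_of_int \<bar>t\<bar>" using T(2) by force
    then show "inv_abs_powr p t = 1 / real (Suc (nat t - 1)) powr p"
      by (simp add: inv_abs_powr_def powr_minus_divide)
  qed simp
  also have "\<dots> = (\<Sum>k\<in>(\<lambda>t. nat t - 1) ` (T - {0}). 1 / real (Suc k) powr p)"
    by (simp only: sum.reindex[OF inj] comp_def)
  also have "\<dots> \<le> zeta_real p"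
    unfolding zeta_real_def using T by (intro sum_le_suminf summable_zeta_real_terms p) auto
  finally show ?thesis .
qed

lemma sum_inv_abs_powr_le_zeta_real:
  assumes p: "p > 1" and T: "finite T"
  shows "(\<Sum>t\<in>T. inv_abs_powr p t) \<le> 2 * zeta_real p"
proof -
  let ?N = "T - {0..}"
  have "(\<Sum>t\<in>T. inv_abs_powr p t) = (\<Sum>t\<in>T \<inter> {0..}. inv_abs_powr p t) + (\<Sum>t\<in>?N. inv_abs_powr p t)"
    using T by (simp add: sum.Int_Diff)
  also have "(\<Sum>t\<in>?N. inv_abs_powr p t) = (\<Sum>t\<in>uminus ` ?N. inv_abs_powr p t)"
    by (simp add: sum.reindex)
  also have "(\<Sum>t\<in>T \<inter> {0..}. inv_abs_powr p t) \<le> zeta_real p"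
    using p T by (intro sum_inv_abs_powr_nonneg_le_zeta_real) auto
  also have "(\<Sum>t\<in>uminus ` ?N. inv_abs_powr p t) \<le> zeta_real p"
    using p T by (intro sum_inv_abs_powr_nonneg_le_zeta_real) auto
  finally show ?thesis by simp
qed

lemma mult_inv_abs_powr_mult_le:
  assumes "p \<ge> 1" and "g \<ge> 1"
  shows "real_of_int g * inv_abs_powr p (g * t) \<le> inv_abs_powr p t"
proof -
  have "real_of_int g * inv_abs_powr p g = real_of_int g powr (1 - p)"
    using assms by (simp add: inv_abs_powr_def powr_diff powr_minus_divide)
  also have "\<dots> \<le> 1" using assms powr_mono[of "1 - p" 0 "real_of_int g"] by simp
  finally have "real_of_int g * inv_abs_powr p g \<le> 1" .
  then have "(real_of_int g * inv_abs_powr p g) * inv_abs_powr p t \<le> 1 * inv_abs_powr p t"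
    by (rule mult_right_mono) simp
  then show ?thesis by (simp add: inv_abs_powr_mult mult.assoc)
qed

text \<open>Only multiples \<open>l = g t\<close> of \<open>g = gcd c n\<close> admit solutions, at most \<open>g\<close> of them,
  and \<open>g \<bar>g t\<bar>\<^sup>-\<^sup>p \<le> \<bar>t\<bar>\<^sup>-\<^sup>p\<close>.\<close>
lemma sum_inv_abs_powr_mult_card_unit_solutions_le:
  assumes n: "n > 0" and p: "p > 1" and L: "finite L"
  shows "(\<Sum>l\<in>L. inv_abs_powr p l * card (unit_solutions n c l)) \<le> 2 * zeta_real p"
proof -
  define g where "g = gcd c (int n)"
  have g_ge_1: "g \<ge> 1" using n by (simp add: g_def int_one_le_iff_zero_less)
  have term_le: "inv_abs_powr p l * card (unit_solutions n c l)
      \<le> (if g dvd l then inv_abs_powr p (l div g) else 0)" for l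
  proof (cases "unit_solutions n c l = {}")
    case False
    then have gcd_eq: "gcd l (int n) = g" unfolding g_def by (auto intro: gcd_eq_if_unit_solution)
    then obtain t where l_eq: "l = g * t" by (metis gcd_dvd1 dvdE)
    have "card (unit_solutions n c l) \<le> real_of_int g"
      using card_unit_solutions_le_gcd[OF n, of c l] gcd_eq by linarith
    then have "inv_abs_powr p l * card (unit_solutions n c l) \<le> inv_abs_powr p l * real_of_int g"
      by (rule mult_left_mono) simp
    also have "\<dots> = real_of_int g * inv_abs_powr p (g * t)" by (simp add: l_eq)
    also have "\<dots> \<le> inv_abs_powr p t" using p g_ge_1 by (intro mult_inv_abs_powr_mult_le) auto
    finally show ?thesis using g_ge_1 by (simp add: l_eq)
  qed simp
  have "(\<Sum>l\<in>L. inv_abs_powr p l * card (unit_solutions n c l))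
      \<le> (\<Sum>l\<in>L. if g dvd l then inv_abs_powr p (l div g) else 0)"
    by (intro sum_mono term_le)
  also have "\<dots> = (\<Sum>l\<in>{l\<in>L. g dvd l}. inv_abs_powr p (l div g))"
    using L by (simp add: sum.inter_filter)
  also have "\<dots> = (\<Sum>t\<in>(\<lambda>l. l div g) ` {l\<in>L. g dvd l}. inv_abs_powr p t)"
    using g_ge_1 by (subst sum.reindex) (auto simp: inj_on_def)
  also have "\<dots> \<le> 2 * zeta_real p"
    using p L by (intro sum_inv_abs_powr_le_zeta_real) auto
  finally show ?thesis .
qed

lemma inv_abs_powr_le_diff:
  assumes "p \<ge> 0" and "v \<noteq> u" and "\<bar>v\<bar> \<le> \<bar>u\<bar>"
  shows "inv_abs_powr p u \<le> 2 powr p * inv_abs_powr p (v - u)"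
proof -
  have "0 < \<bar>v - u\<bar>" "\<bar>v - u\<bar> \<le> 2 * \<bar>u\<bar>" using assms by arith+
  then have "0 < real_of_int \<bar>v - u\<bar> / 2" "real_of_int \<bar>v - u\<bar> / 2 \<le> real_of_int \<bar>u\<bar>"
    by (simp_all add: field_simps flip: of_int_abs)
  then have "inv_abs_powr p u \<le> (real_of_int \<bar>v - u\<bar> / 2) powr (- p)"
    unfolding inv_abs_powr_def using assms(1) by (intro powr_mono2') auto
  also have "\<dots> = real_of_int \<bar>v - u\<bar> powr (- p) / 2 powr (- p)" by (rule powr_divide)
  also have "\<dots> = 2 powr p * inv_abs_powr p (v - u)"
    by (simp add: inv_abs_powr_def powr_minus divide_inverse)
  finally show ?thesis .
qed

lemma inv_abs_powr_mult_le:
  assumes "p \<ge> 0" and "x \<noteq> y"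
  shows "inv_abs_powr p x * inv_abs_powr p y
    \<le> 2 powr p * inv_abs_powr p (y - x) * (inv_abs_powr p x + inv_abs_powr p y)"
proof (cases "\<bar>y\<bar> \<le> \<bar>x\<bar>")
  case True
  then have "inv_abs_powr p x * inv_abs_powr p y \<le> (2 powr p * inv_abs_powr p (y - x)) * inv_abs_powr p y"
    using assms by (intro mult_right_mono inv_abs_powr_le_diff) auto
  also have "\<dots> \<le> (2 powr p * inv_abs_powr p (y - x)) * (inv_abs_powr p x + inv_abs_powr p y)"
    by (intro mult_left_mono) auto
  finally show ?thesis .
next
  case False
  have "inv_abs_powr p (x - y) = inv_abs_powr p (y - x)" by (metis inv_abs_powr_uminus minus_diff_eq)
  then have "inv_abs_powr p y \<le> 2 powr p * inv_abs_powr p (y - x)"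
    using assms False inv_abs_powr_le_diff[of p x y] by auto
  then have "inv_abs_powr p x * inv_abs_powr p y \<le> (2 powr p * inv_abs_powr p (y - x)) * inv_abs_powr p x"
    by (subst mult.commute) (intro mult_right_mono; simp)
  also have "\<dots> \<le> (2 powr p * inv_abs_powr p (y - x)) * (inv_abs_powr p x + inv_abs_powr p y)"
    by (intro mult_left_mono) auto
  finally show ?thesis .
qed

lemma sum_offdiag_conv_le:
  fixes \<nu> :: "int \<Rightarrow> real"
  assumes p: "p > 1" and I: "finite I" and \<nu>_nonneg: "\<And>l. \<nu> l \<ge> 0"
    and \<nu>_le: "\<And>L. finite L \<Longrightarrow> (\<Sum>l\<in>L. inv_abs_powr p l * \<nu> l) \<le> 2 * zeta_real p"
  shows "(\<Sum>x\<in>I. \<Sum>y\<in>I. if y = x then 0 else inv_abs_powr p x * inv_abs_powr p y * \<nu> (y - x))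
    \<le> 2 powr (p + 1) * (2 * zeta_real p)\<^sup>2"
proof -
  define Z where "Z = 2 * zeta_real p"
  define w where "w l = inv_abs_powr p l * \<nu> l" for l
  have w_nonneg: "w l \<ge> 0" for l unfolding w_def using \<nu>_nonneg by simp
  have weighted_le: "(\<Sum>x\<in>I. inv_abs_powr p x * F x) \<le> Z * Z" if "\<And>x. F x \<le> Z" for F
  proof -
    have "(\<Sum>x\<in>I. inv_abs_powr p x * F x) \<le> (\<Sum>x\<in>I. inv_abs_powr p x) * Z"
      unfolding sum_distrib_right using that by (intro sum_mono mult_left_mono) auto
    also have "\<dots> \<le> Z * Z"
      using sum_inv_abs_powr_le_zeta_real[OF p I] zeta_real_nonneg[OF p]
      unfolding Z_def by (intro mult_right_mono) auto
    finally show ?thesis .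
  qed
  have left_le: "(\<Sum>x\<in>I. \<Sum>y\<in>I. inv_abs_powr p x * w (y - x)) \<le> Z * Z"
  proof -
    have "(\<Sum>y\<in>I. w (y - x)) \<le> Z" for x
      using \<nu>_le[of "(\<lambda>y. y - x) ` I"] I by (simp add: w_def Z_def sum.reindex inj_on_def)
    then show ?thesis by (simp add: weighted_le flip: sum_distrib_left)
  qed
  have right_le: "(\<Sum>x\<in>I. \<Sum>y\<in>I. inv_abs_powr p y * w (y - x)) \<le> Z * Z"
  proof -
    have "(\<Sum>x\<in>I. w (y - x)) \<le> Z" for y
      using \<nu>_le[of "(\<lambda>x. y - x) ` I"] I by (simp add: w_def Z_def sum.reindex inj_on_def)
    then show ?thesis by (subst sum.swap) (simp add: weighted_le flip: sum_distrib_left)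
  qed
  have term_le: "(if y = x then 0 else inv_abs_powr p x * inv_abs_powr p y * \<nu> (y - x))
      \<le> 2 powr p * (inv_abs_powr p x * w (y - x) + inv_abs_powr p y * w (y - x))" for x y
  proof (cases "y = x")
    case False
    then have "inv_abs_powr p x * inv_abs_powr p y * \<nu> (y - x)
        \<le> 2 powr p * inv_abs_powr p (y - x) * (inv_abs_powr p x + inv_abs_powr p y) * \<nu> (y - x)"
      using p by (intro mult_right_mono inv_abs_powr_mult_le \<nu>_nonneg) auto
    then show ?thesis using False by (simp add: w_def algebra_simps)
  qed (simp add: w_nonneg)
  have "(\<Sum>x\<in>I. \<Sum>y\<in>I. if y = x then 0 else inv_abs_powr p x * inv_abs_powr p y * \<nu> (y - x))
      \<le> (\<Sum>x\<in>I. \<Sum>y\<in>I. 2 powr p * (inv_abs_powr p x * w (y - x) + inv_abs_powr p y * w (y - x)))"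
    by (intro sum_mono term_le)
  also have "\<dots> = 2 powr p * ((\<Sum>x\<in>I. \<Sum>y\<in>I. inv_abs_powr p x * w (y - x))
      + (\<Sum>x\<in>I. \<Sum>y\<in>I. inv_abs_powr p y * w (y - x)))"
    by (simp only: sum.distrib sum_distrib_left distrib_left)
  also have "\<dots> \<le> 2 powr p * (Z * Z + Z * Z)"
    using left_le right_le by (intro mult_left_mono add_mono) auto
  also have "\<dots> = 2 powr (p + 1) * Z\<^sup>2" by (simp add: powr_add power2_eq_square)
  finally show ?thesis unfolding Z_def .
qed

lemma sum_axis_conv_le:
  fixes \<nu> :: "int \<Rightarrow> real"
  assumes p: "p > 1" and I: "finite I" and \<nu>_nonneg: "\<And>l. \<nu> l \<ge> 0"
    and \<nu>_le: "\<And>L. finite L \<Longrightarrow> (\<Sum>l\<in>L. inv_abs_powr p l * \<nu> l) \<le> 2 * zeta_real p"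
  shows "(\<Sum>x\<in>I. \<Sum>y\<in>I. if x = 0 then inv_abs_powr p y * \<nu> y else 0) \<le> 2 * zeta_real p"
    and "(\<Sum>x\<in>I. \<Sum>y\<in>I. if y = 0 then inv_abs_powr p x * \<nu> (- x) else 0) \<le> 2 * zeta_real p"
proof -
  have inner: "(\<Sum>y\<in>I. if x = 0 then inv_abs_powr p y * \<nu> y else 0)
      = (if x = 0 then \<Sum>y\<in>I. inv_abs_powr p y * \<nu> y else 0)" for x
    by simp
  have "(\<Sum>x\<in>I. \<Sum>y\<in>I. if x = 0 then inv_abs_powr p y * \<nu> y else 0)
      = (if 0 \<in> I then \<Sum>y\<in>I. inv_abs_powr p y * \<nu> y else 0)"
    by (simp only: inner sum.delta I)
  also have "\<dots> \<le> 2 * zeta_real p" using \<nu>_le[OF I] zeta_real_nonneg[OF p] by simp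
  finally show "(\<Sum>x\<in>I. \<Sum>y\<in>I. if x = 0 then inv_abs_powr p y * \<nu> y else 0) \<le> 2 * zeta_real p" .
  have "(\<Sum>x\<in>I. \<Sum>y\<in>I. if y = 0 then inv_abs_powr p x * \<nu> (- x) else 0)
      \<le> (\<Sum>x\<in>I. inv_abs_powr p x * \<nu> (- x))"
    using I \<nu>_nonneg by (intro sum_mono) (simp add: sum.delta)
  also have "\<dots> \<le> 2 * zeta_real p"
    using \<nu>_le[of "uminus ` I"] I by (simp add: sum.reindex)
  finally show "(\<Sum>x\<in>I. \<Sum>y\<in>I. if y = 0 then inv_abs_powr p x * \<nu> (- x) else 0) \<le> 2 * zeta_real p" .
qed

lemma sum_weighted_conv_le:
  fixes \<nu> :: "int \<Rightarrow> real"
  assumes p: "p > 1" and I: "finite I" and \<nu>_nonneg: "\<And>l. \<nu> l \<ge> 0"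
    and \<nu>_le: "\<And>L. finite L \<Longrightarrow> (\<Sum>l\<in>L. inv_abs_powr p l * \<nu> l) \<le> 2 * zeta_real p"
    and "H0 \<ge> 0" "H1 \<ge> 0" "K0 \<ge> 0" "K1 \<ge> 0"
  shows "(\<Sum>x\<in>I. \<Sum>y\<in>I. (H0 * of_bool (x = 0) + H1 * inv_abs_powr p x)
            * (K0 * of_bool (y = 0) + K1 * inv_abs_powr p y) * (if y = x then 0 else \<nu> (y - x)))
    \<le> 2 * zeta_real p * (H0 * K1 + H1 * K0) + 2 powr (p + 1) * (2 * zeta_real p)\<^sup>2 * (H1 * K1)"
proof -
  define Z where "Z = 2 * zeta_real p"
  define corner0 where "corner0 x y = (if x = 0 then inv_abs_powr p y * \<nu> y else 0)" for x y :: int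
  define corner1 where "corner1 x y = (if y = 0 then inv_abs_powr p x * \<nu> (- x) else 0)" for x y :: int
  define offdiag where
    "offdiag x y = (if y = x then 0 else inv_abs_powr p x * inv_abs_powr p y * \<nu> (y - x))" for x y
  have term_le: "(H0 * of_bool (x = 0) + H1 * inv_abs_powr p x)
      * (K0 * of_bool (y = 0) + K1 * inv_abs_powr p y) * (if y = x then 0 else \<nu> (y - x))
    \<le> H0 * K1 * corner0 x y + H1 * K0 * corner1 x y + H1 * K1 * offdiag x y" for x y
  proof (cases "y = x")
    case True
    then show ?thesis using assms by (simp add: corner0_def corner1_def offdiag_def)
  next
    case False
    then show ?thesis
      by (cases "x = 0"; cases "y = 0") (simp_all add: corner0_def corner1_def offdiag_def algebra_simps)
  qed
  have "H0 * K1 * (\<Sum>x\<in>I. \<Sum>y\<in>I. corner0 x y) + H1 * K0 * (\<Sum>x\<in>I. \<Sum>y\<in>I. corner1 x y)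
      + H1 * K1 * (\<Sum>x\<in>I. \<Sum>y\<in>I. offdiag x y)
    \<le> H0 * K1 * Z + H1 * K0 * Z + H1 * K1 * (2 powr (p + 1) * Z\<^sup>2)"
    using assms sum_axis_conv_le[OF p I \<nu>_nonneg \<nu>_le] sum_offdiag_conv_le[OF p I \<nu>_nonneg \<nu>_le]
    unfolding corner0_def corner1_def offdiag_def Z_def by (intro add_mono mult_left_mono) auto
  then have sum_le: "(\<Sum>x\<in>I. \<Sum>y\<in>I. H0 * K1 * corner0 x y + H1 * K0 * corner1 x y + H1 * K1 * offdiag x y)
    \<le> Z * (H0 * K1 + H1 * K0) + 2 powr (p + 1) * Z\<^sup>2 * (H1 * K1)"
    by (simp only: sum.distrib sum_distrib_left) (simp add: algebra_simps)
  show ?thesis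
    unfolding Z_def[symmetric] by (rule order.trans[OF sum_mono[OF sum_mono[OF term_le]] sum_le])
qed

definition zbox :: "nat set \<Rightarrow> int \<Rightarrow> (nat \<Rightarrow> int) set" where
  "zbox J M = {h. (\<forall>j\<in>J. \<bar>h j\<bar> \<le> M) \<and> (\<forall>j. j \<notin> J \<longrightarrow> h j = 0)}"

lemma zbox_empty [simp]: "zbox {} M = {\<lambda>_. 0}"
  unfolding zbox_def by auto

lemma zbox_insert:
  assumes "i \<notin> J"
  shows "zbox (insert i J) M = (\<lambda>(h, x). h(i := x)) ` (zbox J M \<times> {-M..M})"
proof
  show "zbox (insert i J) M \<subseteq> (\<lambda>(h, x). h(i := x)) ` (zbox J M \<times> {-M..M})"
  proof
    fix h assume h: "h \<in> zbox (insert i J) M"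
    then have "(h(i := 0), h i) \<in> zbox J M \<times> {-M..M}"
      using assms unfolding zbox_def by auto
    then show "h \<in> (\<lambda>(h, x). h(i := x)) ` (zbox J M \<times> {-M..M})"
      by (rule image_eqI[rotated]) simp
  qed
qed (auto simp: zbox_def)

lemma inj_on_zbox_insert:
  assumes "i \<notin> J"
  shows "inj_on (\<lambda>(h, x). h(i := x)) (zbox J M \<times> {-M..M})"
proof (rule inj_onI, clarify)
  fix h x h' x'
  assume h: "h \<in> zbox J M" and h': "h' \<in> zbox J M" and upd_eq: "h(i := x) = h'(i := x')"
  have "h j = h' j" for j
  proof (cases "j = i")
    case True
    then show ?thesis using h h' assms by (simp add: zbox_def)
  next
    case False
    then show ?thesis using fun_cong[OF upd_eq, of j] by simp
  qed
  then show "h = h' \<and> x = x'" using fun_cong[OF upd_eq, of i] by auto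
qed

lemma finite_zbox: "finite J \<Longrightarrow> finite (zbox J M)"
  by (induction J rule: finite_induct) (simp_all add: zbox_insert)

lemma sum_zbox_insert:
  assumes "i \<notin> J"
  shows "(\<Sum>h\<in>zbox (insert i J) M. f h) = (\<Sum>h\<in>zbox J M. \<Sum>x\<in>{-M..M}. f (h(i := x)))"
  unfolding zbox_insert[OF assms] sum.reindex[OF inj_on_zbox_insert[OF assms]]
  by (simp add: sum.cartesian_product split_def)

lemma sum_Pow_insert:
  assumes "finite J" "i \<notin> J"
  shows "(\<Sum>u\<in>Pow (insert i J). f u) = (\<Sum>u\<in>Pow J. f u) + (\<Sum>u\<in>Pow J. f (insert i u))"
proof -
  have "inj_on (insert i) (Pow J)"
    using assms(2) unfolding inj_on_def by (metis Pow_iff insert_ident subset_iff)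
  moreover have "Pow J \<inter> insert i ` Pow J = {}" using assms(2) by auto
  ultimately show ?thesis
    using assms(1) by (simp add: Pow_insert sum.union_disjoint sum.reindex)
qed

lemma sum_subsets_containing:
  assumes "finite J" "i \<notin> J"
  shows "(\<Sum>u | u \<subseteq> insert i J \<and> i \<in> u. f u) = (\<Sum>u\<in>Pow J. f (insert i u))"
proof -
  have "{u. u \<subseteq> insert i J \<and> i \<in> u} = insert i ` Pow J"
  proof (intro equalityI subsetI)
    fix u assume "u \<in> {u. u \<subseteq> insert i J \<and> i \<in> u}"
    then have "u = insert i (u - {i})" "u - {i} \<in> Pow J" by auto
    then show "u \<in> insert i ` Pow J" by blast
  qed auto
  moreover have "inj_on (insert i) (Pow J)"
    using assms(2) unfolding inj_on_def by (metis Pow_iff insert_ident subset_iff)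
  ultimately show ?thesis by (simp add: sum.reindex)
qed

lemma sum_subsets_containing_power:
  fixes Z :: "'b::comm_semiring_1"
  assumes "finite J" "i \<notin> J"
  shows "(\<Sum>u | u \<subseteq> insert i J \<and> i \<in> u. f u * Z ^ card u)
    = Z * (\<Sum>u\<in>Pow J. f (insert i u) * Z ^ card u)"
  unfolding sum_subsets_containing[OF assms] sum_distrib_left
proof (intro sum.cong refl)
  fix u assume "u \<in> Pow J"
  then have "finite u" "i \<notin> u" using assms by (auto intro: finite_subset)
  then show "f (insert i u) * Z ^ card (insert i u) = Z * (f (insert i u) * Z ^ card u)"
    by (simp add: ac_simps)
qed

text \<open>Since \<open>inv_abs_powr p 0 = 0\<close>, summing a new coordinate over \<open>[-M, M]\<close> either keeps
  it out of the support or contributes the factor \<open>\<Sum>x\<in>{-M..M}. inv_abs_powr p x\<close>.\<close>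
lemma sum_upd_supp_weight:
  assumes "finite J" "i \<notin> J" "M \<ge> 0"
  shows "(\<Sum>x\<in>{-M..M}. F {j\<in>insert i J. (h(i := x)) j \<noteq> 0}
        * (\<Prod>j\<in>{j\<in>insert i J. (h(i := x)) j \<noteq> 0}. inv_abs_powr p ((h(i := x)) j)))
    = F {j\<in>J. h j \<noteq> 0} * (\<Prod>j\<in>{j\<in>J. h j \<noteq> 0}. inv_abs_powr p (h j))
      + (\<Sum>x\<in>{-M..M}. inv_abs_powr p x)
        * (F (insert i {j\<in>J. h j \<noteq> 0}) * (\<Prod>j\<in>{j\<in>J. h j \<noteq> 0}. inv_abs_powr p (h j)))"
proof -
  define S where "S = {j\<in>J. h j \<noteq> 0}"
  define P where "P = (\<Prod>j\<in>S. inv_abs_powr p (h j))"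
  have P_upd: "(\<Prod>j\<in>S. inv_abs_powr p ((h(i := x)) j)) = P" for x
    unfolding P_def S_def using assms(2) by (intro prod.cong) auto
  have "F {j\<in>insert i J. (h(i := x)) j \<noteq> 0}
      * (\<Prod>j\<in>{j\<in>insert i J. (h(i := x)) j \<noteq> 0}. inv_abs_powr p ((h(i := x)) j))
    = (if x = 0 then F S * P else 0) + inv_abs_powr p x * (F (insert i S) * P)" for x
  proof (cases "x = 0")
    case True
    then have "{j\<in>insert i J. (h(i := x)) j \<noteq> 0} = S" using assms(2) by (auto simp: S_def)
    then show ?thesis using True P_upd by simp
  next
    case False
    then have "{j\<in>insert i J. (h(i := x)) j \<noteq> 0} = insert i S" by (auto simp: S_def)
    moreover have "i \<notin> S" "finite S" using assms(1,2) by (auto simp: S_def)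
    ultimately show ?thesis using False P_upd by simp
  qed
  then have "(\<Sum>x\<in>{-M..M}. F {j\<in>insert i J. (h(i := x)) j \<noteq> 0}
        * (\<Prod>j\<in>{j\<in>insert i J. (h(i := x)) j \<noteq> 0}. inv_abs_powr p ((h(i := x)) j)))
    = (\<Sum>x\<in>{-M..M}. if x = 0 then F S * P else 0) + (\<Sum>x\<in>{-M..M}. inv_abs_powr p x) * (F (insert i S) * P)"
    by (simp add: sum.distrib sum_distrib_right)
  then show ?thesis using assms(3) by (simp add: S_def P_def)
qed

lemma sum_zbox_supp_weight:
  assumes "finite J" and "M \<ge> 0"
  shows "(\<Sum>h\<in>zbox J M. F {j\<in>J. h j \<noteq> 0} * (\<Prod>j\<in>{j\<in>J. h j \<noteq> 0}. inv_abs_powr p (h j)))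
    = (\<Sum>u\<in>Pow J. F u * (\<Sum>x\<in>{-M..M}. inv_abs_powr p x) ^ card u)"
  using assms(1)
proof (induction J arbitrary: F rule: finite_induct)
  case (insert i J)
  define A where "A = (\<Sum>x\<in>{-M..M}. inv_abs_powr p x)"
  have "(\<Sum>h\<in>zbox (insert i J) M. F {j\<in>insert i J. h j \<noteq> 0}
        * (\<Prod>j\<in>{j\<in>insert i J. h j \<noteq> 0}. inv_abs_powr p (h j)))
      = (\<Sum>h\<in>zbox J M. F {j\<in>J. h j \<noteq> 0} * (\<Prod>j\<in>{j\<in>J. h j \<noteq> 0}. inv_abs_powr p (h j)))
        + A * (\<Sum>h\<in>zbox J M. F (insert i {j\<in>J. h j \<noteq> 0})
          * (\<Prod>j\<in>{j\<in>J. h j \<noteq> 0}. inv_abs_powr p (h j)))"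
    unfolding sum_zbox_insert[OF insert.hyps(2)] sum_upd_supp_weight[OF insert.hyps assms(2)] A_def
    by (simp add: sum.distrib sum_distrib_left)
  also have "\<dots> = (\<Sum>u\<in>Pow J. F u * A ^ card u) + A * (\<Sum>u\<in>Pow J. F (insert i u) * A ^ card u)"
    unfolding A_def by (simp only: insert.IH[of F] insert.IH[of "\<lambda>u. F (insert i u)"])
  also have "A * (\<Sum>u\<in>Pow J. F (insert i u) * A ^ card u)
      = (\<Sum>u\<in>Pow J. F (insert i u) * A ^ card (insert i u))"
    unfolding sum_distrib_left
  proof (intro sum.cong refl)
    fix u assume "u \<in> Pow J"
    then have "finite u" "i \<notin> u" using insert.hyps by (auto intro: finite_subset)
    then show "A * (F (insert i u) * A ^ card u) = F (insert i u) * A ^ card (insert i u)" by simp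
  qed
  finally show ?case unfolding A_def by (simp add: sum_Pow_insert[OF insert.hyps])
qed simp

lemma sum_zbox_supp_weight_le:
  assumes "finite J" "M \<ge> 0" "p > 1" "\<And>u. F u \<ge> 0"
  shows "(\<Sum>h\<in>zbox J M. F {j\<in>J. h j \<noteq> 0} * (\<Prod>j\<in>{j\<in>J. h j \<noteq> 0}. inv_abs_powr p (h j)))
    \<le> (\<Sum>u\<in>Pow J. F u * (2 * zeta_real p) ^ card u)"
  unfolding sum_zbox_supp_weight[OF assms(1,2)]
  using assms sum_inv_abs_powr_le_zeta_real[of p "{-M..M}"]
  by (intro sum_mono mult_left_mono power_mono sum_nonneg) auto

definition vec_weight :: "nat \<Rightarrow> real \<Rightarrow> real \<Rightarrow> (nat set \<Rightarrow> real) \<Rightarrow> (nat \<Rightarrow> int) \<Rightarrow> real" where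
  "vec_weight s p lam \<beta> h = \<beta> (supp_vec s h) powr lam * (\<Prod>j\<in>supp_vec s h. inv_abs_powr p (h j))"

lemma vec_weight_nonneg [simp]: "vec_weight s p lam \<beta> h \<ge> 0"
  unfolding vec_weight_def by (simp add: prod_nonneg)

lemma vec_weight_upd_last:
  assumes "s \<ge> 1"
  shows "vec_weight s p lam \<beta> (h(s := x))
    = vec_weight (s - 1) p lam \<beta> h * of_bool (x = 0)
      + vec_weight (s - 1) p lam (\<lambda>u. \<beta> (insert s u)) h * inv_abs_powr p x"
proof -
  let ?S = "supp_vec (s - 1) h"
  have prod_upd: "(\<Prod>j\<in>?S. inv_abs_powr p ((h(s := x)) j)) = (\<Prod>j\<in>?S. inv_abs_powr p (h j))"
    by (intro prod.cong) (auto simp: supp_vec_def)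
  show ?thesis
  proof (cases "x = 0")
    case True
    then have "supp_vec s (h(s := x)) = ?S" using assms by (auto simp: supp_vec_def)
    then show ?thesis using True prod_upd by (simp add: vec_weight_def)
  next
    case False
    then have "supp_vec s (h(s := x)) = insert s ?S" using assms by (auto simp: supp_vec_def)
    moreover have "s \<notin> ?S" using assms by (auto simp: supp_vec_def)
    ultimately show ?thesis using False prod_upd by (simp add: vec_weight_def supp_vec_def)
  qed
qed

lemma sum_zbox_vec_weight_le:
  assumes "M \<ge> 0" "p > 1"
  shows "(\<Sum>h\<in>zbox {1..s} M. vec_weight s p lam \<beta> h)
    \<le> (\<Sum>u\<in>Pow {1..s}. \<beta> u powr lam * (2 * zeta_real p) ^ card u)"
  unfolding vec_weight_def supp_vec_def using assms by (intro sum_zbox_supp_weight_le) auto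

lemma sum_zbox_pairs_le_weights:
  fixes s :: nat and M :: int and p lam :: real and \<beta> :: "nat set \<Rightarrow> real" and z :: "nat \<Rightarrow> int"
  defines "W0 \<equiv> \<Sum>h\<in>zbox {1..s-1} M. vec_weight (s - 1) p lam \<beta> h"
    and "W1 \<equiv> \<Sum>h\<in>zbox {1..s-1} M. vec_weight (s - 1) p lam (\<lambda>u. \<beta> (insert s u)) h"
  assumes n: "n > 0" and p: "p > 1" and s: "s \<ge> 1"
  shows "(\<Sum>h\<in>zbox {1..s} M. \<Sum>k\<in>zbox {1..s} M.
      if k s = h s then 0 else vec_weight s p lam \<beta> h * vec_weight s p lam \<beta> k
        * card (unit_solutions n (\<Sum>j=1..s-1. (k j - h j) * z j) (k s - h s)))
    \<le> 2 * zeta_real p * (2 * W0 * W1) + 2 powr (p + 1) * (2 * zeta_real p)\<^sup>2 * W1\<^sup>2"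
proof -
  define J where "J = {1..s-1}"
  have J: "s \<notin> J" and box_s: "{1..s} = insert s J" using s by (auto simp: J_def)
  define Z where "Z = 2 * zeta_real p"
  define H0 where "H0 = vec_weight (s - 1) p lam \<beta>"
  define H1 where "H1 = vec_weight (s - 1) p lam (\<lambda>u. \<beta> (insert s u))"
  define \<nu> where "\<nu> h k l = real (card (unit_solutions n (\<Sum>j\<in>J. (k j - h j) * z j) l))" for h k l
  have term_upd: "(if (k(s := y)) s = (h(s := x)) s then 0
        else vec_weight s p lam \<beta> (h(s := x)) * vec_weight s p lam \<beta> (k(s := y))
          * card (unit_solutions n (\<Sum>j=1..s-1. ((k(s := y)) j - (h(s := x)) j) * z j)
              ((k(s := y)) s - (h(s := x)) s)))
      = (H0 h * of_bool (x = 0) + H1 h * inv_abs_powr p x)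
        * (H0 k * of_bool (y = 0) + H1 k * inv_abs_powr p y) * (if y = x then 0 else \<nu> h k (y - x))"
    for h k x y
  proof -
    have "(\<Sum>j=1..s-1. ((k(s := y)) j - (h(s := x)) j) * z j) = (\<Sum>j\<in>J. (k j - h j) * z j)"
      using J by (intro sum.cong) (auto simp: J_def)
    then show ?thesis by (simp add: vec_weight_upd_last[OF s] H0_def H1_def \<nu>_def)
  qed
  have conv_le: "(\<Sum>x\<in>{-M..M}. \<Sum>y\<in>{-M..M}. (H0 h * of_bool (x = 0) + H1 h * inv_abs_powr p x)
        * (H0 k * of_bool (y = 0) + H1 k * inv_abs_powr p y) * (if y = x then 0 else \<nu> h k (y - x)))
      \<le> Z * (H0 h * H1 k + H1 h * H0 k) + 2 powr (p + 1) * Z\<^sup>2 * (H1 h * H1 k)" for h k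
    unfolding Z_def \<nu>_def using n p
    by (intro sum_weighted_conv_le sum_inv_abs_powr_mult_card_unit_solutions_le) (auto simp: H0_def H1_def)
  have "(\<Sum>h\<in>zbox {1..s} M. \<Sum>k\<in>zbox {1..s} M.
      if k s = h s then 0 else vec_weight s p lam \<beta> h * vec_weight s p lam \<beta> k
        * card (unit_solutions n (\<Sum>j=1..s-1. (k j - h j) * z j) (k s - h s)))
    = (\<Sum>h\<in>zbox J M. \<Sum>k\<in>zbox J M. \<Sum>x\<in>{-M..M}. \<Sum>y\<in>{-M..M}.
        (H0 h * of_bool (x = 0) + H1 h * inv_abs_powr p x)
        * (H0 k * of_bool (y = 0) + H1 k * inv_abs_powr p y) * (if y = x then 0 else \<nu> h k (y - x)))"
    unfolding box_s sum_zbox_insert[OF J] term_upd by (subst sum.swap) simp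
  also have "\<dots> \<le> (\<Sum>h\<in>zbox J M. \<Sum>k\<in>zbox J M.
      Z * (H0 h * H1 k + H1 h * H0 k) + 2 powr (p + 1) * Z\<^sup>2 * (H1 h * H1 k))"
    by (intro sum_mono conv_le)
  also have "\<dots> = Z * ((\<Sum>h\<in>zbox J M. H0 h) * (\<Sum>k\<in>zbox J M. H1 k)
        + (\<Sum>h\<in>zbox J M. H1 h) * (\<Sum>k\<in>zbox J M. H0 k))
      + 2 powr (p + 1) * Z\<^sup>2 * ((\<Sum>h\<in>zbox J M. H1 h) * (\<Sum>k\<in>zbox J M. H1 k))"
    unfolding sum_product by (simp only: sum.distrib sum_distrib_left distrib_left)
  also have "\<dots> = Z * (2 * W0 * W1) + 2 powr (p + 1) * Z\<^sup>2 * W1\<^sup>2"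
    unfolding W0_def W1_def H0_def H1_def J_def by (simp add: power2_eq_square)
  finally show ?thesis unfolding Z_def .
qed

lemma sum_zbox_pairs_le:
  fixes z :: "nat \<Rightarrow> int"
  assumes n: "n > 0" and p: "p > 1" and s: "s \<ge> 1" and M: "M \<ge> 0"
  shows "(\<Sum>h\<in>zbox {1..s} M. \<Sum>k\<in>zbox {1..s} M.
      if k s = h s then 0 else vec_weight s p lam \<beta> h * vec_weight s p lam \<beta> k
        * card (unit_solutions n (\<Sum>j=1..s-1. (k j - h j) * z j) (k s - h s)))
    \<le> (2 powr (2 * p + 1) + 1)
      * (\<Sum>u\<in>{u. u \<subseteq> {1..s} \<and> s \<in> u}. \<beta> u powr lam * (2 * zeta_real p) ^ card u)
      * (\<Sum>u\<in>{u. u \<subseteq> {1..s}}. \<beta> u powr lam * (2 * zeta_real p) ^ card u)"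
proof -
  define J where "J = {1..s-1}"
  have J: "finite J" "s \<notin> J" and box_s: "{1..s} = insert s J" using s by (auto simp: J_def)
  define Z where "Z = 2 * zeta_real p"
  define K where "K = 2 powr (2 * p + 1) + 1"
  define W0 where "W0 = (\<Sum>h\<in>zbox J M. vec_weight (s - 1) p lam \<beta> h)"
  define W1 where "W1 = (\<Sum>h\<in>zbox J M. vec_weight (s - 1) p lam (\<lambda>u. \<beta> (insert s u)) h)"
  define V0 where "V0 = (\<Sum>u\<in>Pow J. \<beta> u powr lam * Z ^ card u)"
  define V1 where "V1 = (\<Sum>u\<in>{u. u \<subseteq> {1..s} \<and> s \<in> u}. \<beta> u powr lam * Z ^ card u)"
  have Z: "Z \<ge> 0" using zeta_real_nonneg[OF p] by (simp add: Z_def)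
  have "W0 \<le> V0"
    unfolding W0_def V0_def Z_def J_def using M p by (rule sum_zbox_vec_weight_le)
  moreover have "Z * W1 \<le> V1"
    unfolding V1_def box_s sum_subsets_containing_power[OF J] unfolding W1_def Z_def J_def
    using M p Z by (intro mult_left_mono sum_zbox_vec_weight_le) (auto simp: Z_def)
  moreover have "0 \<le> W0" "0 \<le> W1" unfolding W0_def W1_def by (auto intro: sum_nonneg)
  ultimately have W: "0 \<le> W0" "W0 \<le> V0" "0 \<le> Z * W1" "Z * W1 \<le> V1" using Z by auto
  then have V: "0 \<le> V0" "0 \<le> V1" by linarith+
  have total_eq: "(\<Sum>u\<in>{u. u \<subseteq> {1..s}}. \<beta> u powr lam * Z ^ card u) = V0 + V1"
    unfolding V0_def V1_def box_s Pow_def[symmetric] sum_Pow_insert[OF J] sum_subsets_containing[OF J] ..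
  have "2 \<le> 2 powr (p + 1)" "2 powr (p + 1) \<le> 2 powr (2 * p + 1)"
    using p powr_mono[of 1 "p + 1" 2] by (auto intro: powr_mono)
  then have K: "2 \<le> K" "2 powr (p + 1) \<le> K" unfolding K_def by linarith+
  have "(\<Sum>h\<in>zbox {1..s} M. \<Sum>k\<in>zbox {1..s} M.
      if k s = h s then 0 else vec_weight s p lam \<beta> h * vec_weight s p lam \<beta> k
        * card (unit_solutions n (\<Sum>j=1..s-1. (k j - h j) * z j) (k s - h s)))
      \<le> 2 * (W0 * (Z * W1)) + 2 powr (p + 1) * (Z * W1)\<^sup>2"
    using sum_zbox_pairs_le_weights[OF n p s, where M = M and lam = lam and \<beta> = \<beta> and z = z]
    unfolding W0_def W1_def Z_def J_def by (simp add: power2_eq_square algebra_simps)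
  also have "\<dots> \<le> 2 * (V0 * V1) + 2 powr (p + 1) * V1\<^sup>2"
    using W by (intro add_mono mult_left_mono mult_mono power_mono) auto
  also have "\<dots> \<le> K * (V0 * V1) + K * V1\<^sup>2"
    using K V by (intro add_mono mult_right_mono) auto
  also have "\<dots> = K * V1 * (V0 + V1)" by (simp add: power2_eq_square algebra_simps)
  finally show ?thesis unfolding total_eq[symmetric] unfolding V1_def K_def Z_def .
qed

definition theta_index :: "nat \<Rightarrow> nat \<Rightarrow> (nat \<Rightarrow> int) \<Rightarrow> ((nat \<Rightarrow> int) \<times> (nat \<Rightarrow> int)) set" where
  "theta_index n s z = {(h, l). h \<in> zvecs s \<and> l \<in> zvecs s \<and> l s \<noteq> 0 \<and> (\<Sum>j=1..s. l j * z j) mod int n = 0}"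

definition theta_term :: "nat \<Rightarrow> real \<Rightarrow> (nat set \<Rightarrow> real) \<Rightarrow> (nat \<Rightarrow> int) \<times> (nat \<Rightarrow> int) \<Rightarrow> real" where
  "theta_term s \<alpha> \<beta> = (\<lambda>(h, l). (\<beta> (supp_vec s h) / rprime s \<alpha> h)
      * (\<beta> (supp_vec s (\<lambda>j. h j + l j)) / rprime s \<alpha> (\<lambda>j. h j + l j)))"

lemma theta_eq_infsum: "theta n s \<alpha> z \<beta> = infsum (theta_term s \<alpha> \<beta>) (theta_index n s z)"
  unfolding theta_def theta_index_def theta_term_def ..

lemma theta_term_nonneg:
  assumes "\<And>u. u \<subseteq> {1..s} \<Longrightarrow> \<beta> u \<ge> 0"
  shows "theta_term s \<alpha> \<beta> q \<ge> 0"
proof -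
  have "\<beta> (supp_vec s h) \<ge> 0" for h by (rule assms) (auto simp: supp_vec_def)
  moreover have "rprime s \<alpha> h \<ge> 0" for h unfolding rprime_def by (intro prod_nonneg) simp
  ultimately have "\<beta> (supp_vec s h) / rprime s \<alpha> h \<ge> 0" for h by simp
  then show ?thesis unfolding theta_term_def split_def by (intro mult_nonneg_nonneg)
qed

lemma powr_theta_term:
  "theta_term s \<alpha> \<beta> q powr lam
    = vec_weight s (\<alpha> * lam) lam \<beta> (fst q) * vec_weight s (\<alpha> * lam) lam \<beta> (\<lambda>j. fst q j + snd q j)"
proof -
  have "(\<beta> (supp_vec s h) / rprime s \<alpha> h) powr lam = vec_weight s (\<alpha> * lam) lam \<beta> h" for h
  proof -
    have "(\<Prod>j\<in>supp_vec s h. inv_abs_powr (\<alpha> * lam) (h j)) = inverse (rprime s \<alpha> h powr lam)"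
      unfolding rprime_def inv_abs_powr_def prod_powr_distrib powr_minus prod_inversef[symmetric]
      by (simp add: powr_powr comp_def)
    then show ?thesis unfolding vec_weight_def powr_divide by (simp add: divide_inverse)
  qed
  then show ?thesis by (simp only: theta_term_def split_def powr_mult)
qed

lemma theta_index_unit_solution:
  assumes "s \<ge> 1" and "zs \<in> Un_set n" and "(h, l) \<in> theta_index n s (z(s := zs))"
    and "k = (\<lambda>j. h j + l j)"
  shows "k s \<noteq> h s" and "zs \<in> unit_solutions n (\<Sum>j=1..s-1. (k j - h j) * z j) (k s - h s)"
proof -
  have split: "{1..s} = insert s {1..s-1}" "s \<notin> {1..s-1}" using assms(1) by auto
  have "(\<Sum>j=1..s. l j * (z(s := zs)) j) = l s * zs + (\<Sum>j=1..s-1. l j * (z(s := zs)) j)"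
    unfolding split(1) using split(2) by simp
  also have "(\<Sum>j=1..s-1. l j * (z(s := zs)) j) = (\<Sum>j=1..s-1. l j * z j)"
    by (intro sum.cong) auto
  finally have "(\<Sum>j=1..s. l j * (z(s := zs)) j) = (\<Sum>j=1..s-1. (k j - h j) * z j) + (k s - h s) * zs"
    by (simp add: assms(4))
  then show "zs \<in> unit_solutions n (\<Sum>j=1..s-1. (k j - h j) * z j) (k s - h s)"
    using assms(2,3) by (simp add: theta_index_def unit_solutions_def)
  show "k s \<noteq> h s" using assms(3,4) by (simp add: theta_index_def)
qed

lemma finite_subset_zbox:
  assumes "finite H" "H \<subseteq> zvecs s"
  obtains M where "M \<ge> 0" "H \<subseteq> zbox {1..s} M"
proof
  define M where "M = (\<Sum>h\<in>H. \<Sum>j\<in>{1..s}. \<bar>h j\<bar>)"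
  show "M \<ge> 0" unfolding M_def by (intro sum_nonneg) auto
  have "\<bar>h j\<bar> \<le> M" if "h \<in> H" "j \<in> {1..s}" for h j
  proof -
    have "\<bar>h j\<bar> \<le> (\<Sum>j\<in>{1..s}. \<bar>h j\<bar>)" using that by (intro member_le_sum) auto
    also have "\<dots> \<le> M" unfolding M_def using assms that by (intro member_le_sum sum_nonneg) auto
    finally show ?thesis .
  qed
  then show "H \<subseteq> zbox {1..s} M" using assms(2) by (auto simp: zbox_def zvecs_def)
qed

lemma sum_Sigma_pairs_eq:
  fixes w :: "('a \<Rightarrow> 'b) \<Rightarrow> real"
  assumes "finite B" "\<And>hk. finite (sols hk)"
  shows "(\<Sum>((h, k), zs)\<in>Sigma {(h, k) \<in> B \<times> B. k s \<noteq> h s} sols. w h * w k)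
    = (\<Sum>h\<in>B. \<Sum>k\<in>B. if k s = h s then 0 else w h * w k * card (sols (h, k)))"
proof -
  have "finite {(h, k) \<in> B \<times> B. k s \<noteq> h s}"
    by (rule finite_subset[of _ "B \<times> B"]) (use assms(1) in auto)
  then have "(\<Sum>((h, k), zs)\<in>Sigma {(h, k) \<in> B \<times> B. k s \<noteq> h s} sols. w h * w k)
      = (\<Sum>(h, k)\<in>{(h, k) \<in> B \<times> B. k s \<noteq> h s}. w h * w k * card (sols (h, k)))"
    by (simp add: assms(2) flip: sum.Sigma) (simp add: split_def mult.commute)
  also have "\<dots> = (\<Sum>h\<in>B. \<Sum>k\<in>B. if k s = h s then 0 else w h * w k * card (sols (h, k)))"
    unfolding sum.cartesian_product split_def using assms(1)
    by (intro sum.mono_neutral_cong_left) auto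
  finally show ?thesis .
qed

lemma sum_theta_index_le:
  fixes z :: "nat \<Rightarrow> int"
  assumes n: "n > 0" and p: "p > 1" and s: "s \<ge> 1"
    and F: "finite F" "F \<subseteq> Sigma (Un_set n) (\<lambda>zs. theta_index n s (z(s := zs)))"
  shows "(\<Sum>(zs, h, l)\<in>F. vec_weight s p lam \<beta> h * vec_weight s p lam \<beta> (\<lambda>j. h j + l j))
    \<le> (2 powr (2 * p + 1) + 1)
      * (\<Sum>u\<in>{u. u \<subseteq> {1..s} \<and> s \<in> u}. \<beta> u powr lam * (2 * zeta_real p) ^ card u)
      * (\<Sum>u\<in>{u. u \<subseteq> {1..s}}. \<beta> u powr lam * (2 * zeta_real p) ^ card u)"
proof -
  define w where "w = vec_weight s p lam \<beta>"
  \<comment> \<open>The substitution \<open>k = h + l\<close> maps \<open>F\<close> injectively into the solution sets over pairs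
      of vectors in a box.\<close>
  define \<psi> where "\<psi> = (\<lambda>(zs::int, h::nat \<Rightarrow> int, l::nat \<Rightarrow> int). ((h, \<lambda>j. h j + l j), zs))"
  have "finite (fst ` fst ` \<psi> ` F \<union> snd ` fst ` \<psi> ` F)" using F by simp
  moreover have "fst ` fst ` \<psi> ` F \<union> snd ` fst ` \<psi> ` F \<subseteq> zvecs s"
    using F by (auto simp: \<psi>_def theta_index_def zvecs_def)
  ultimately obtain M where "M \<ge> 0" and box: "fst ` fst ` \<psi> ` F \<union> snd ` fst ` \<psi> ` F \<subseteq> zbox {1..s} M"
    by (rule finite_subset_zbox)
  define B where "B = zbox {1..s} M"
  define sols where "sols = (\<lambda>(h, k). unit_solutions n (\<Sum>j=1..s-1. (k j - h j) * z j) (k s - h s))"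
  have fin_B: "finite B" by (simp add: B_def finite_zbox)
  have fin_sols: "finite (sols hk)" for hk
    unfolding sols_def unit_solutions_def by (auto simp: finite_Un_set split: prod.split)
  have fin_Sigma: "finite (Sigma {(h, k) \<in> B \<times> B. k s \<noteq> h s} sols)"
    using fin_B fin_sols by (intro finite_SigmaI finite_subset[of _ "B \<times> B"]) auto
  have inj: "inj_on \<psi> F" by (rule inj_onI) (auto simp: \<psi>_def fun_eq_iff)
  have embed: "\<psi> ` F \<subseteq> Sigma {(h, k) \<in> B \<times> B. k s \<noteq> h s} sols"
  proof (rule image_subsetI)
    fix q assume "q \<in> F"
    moreover obtain zs h l where q: "q = (zs, h, l)" by (cases q)
    ultimately have "zs \<in> Un_set n" "(h, l) \<in> theta_index n s (z(s := zs))" using F by auto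
    note sol = theta_index_unit_solution[OF s this refl]
    have "h \<in> B" "(\<lambda>j. h j + l j) \<in> B" using box \<open>q \<in> F\<close> by (force simp: B_def q \<psi>_def)+
    then show "\<psi> q \<in> Sigma {(h, k) \<in> B \<times> B. k s \<noteq> h s} sols"
      using sol by (simp add: q \<psi>_def sols_def)
  qed
  have "(\<Sum>(zs, h, l)\<in>F. w h * w (\<lambda>j. h j + l j)) = (\<Sum>((h, k), zs)\<in>\<psi> ` F. w h * w k)"
    unfolding sum.reindex[OF inj] by (simp add: \<psi>_def comp_def split_def)
  also have "\<dots> \<le> (\<Sum>((h, k), zs)\<in>Sigma {(h, k) \<in> B \<times> B. k s \<noteq> h s} sols. w h * w k)"
    using embed fin_Sigma by (intro sum_mono2) (auto simp: w_def)
  also have "\<dots> = (\<Sum>h\<in>B. \<Sum>k\<in>B. if k s = h s then 0 else w h * w k * card (sols (h, k)))"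
    by (rule sum_Sigma_pairs_eq[OF fin_B fin_sols])
  also have "\<dots> \<le> (2 powr (2 * p + 1) + 1)
      * (\<Sum>u\<in>{u. u \<subseteq> {1..s} \<and> s \<in> u}. \<beta> u powr lam * (2 * zeta_real p) ^ card u)
      * (\<Sum>u\<in>{u. u \<subseteq> {1..s}}. \<beta> u powr lam * (2 * zeta_real p) ^ card u)"
    unfolding B_def w_def sols_def prod.case by (rule sum_zbox_pairs_le[OF n p s \<open>M \<ge> 0\<close>])
  finally show ?thesis by (simp add: w_def)
qed

lemma sum_theta_powr_le:
  fixes n s :: nat and \<alpha> lam :: real and \<beta> :: "nat set \<Rightarrow> real" and z :: "nat \<Rightarrow> int"
  assumes n: "n > 0" and p: "\<alpha> * lam > 1" and lam: "0 < lam" "lam \<le> 1" and s: "s \<ge> 1"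
    and \<beta>: "\<And>u. u \<subseteq> {1..s} \<Longrightarrow> \<beta> u \<ge> 0"
  shows "(\<Sum>zs\<in>Un_set n. theta n s \<alpha> (z(s := zs)) \<beta> powr lam)
    \<le> (2 powr (2 * (\<alpha> * lam) + 1) + 1)
      * (\<Sum>u\<in>{u. u \<subseteq> {1..s} \<and> s \<in> u}. \<beta> u powr lam * (2 * zeta_real (\<alpha> * lam)) ^ card u)
      * (\<Sum>u\<in>{u. u \<subseteq> {1..s}}. \<beta> u powr lam * (2 * zeta_real (\<alpha> * lam)) ^ card u)"
    (is "_ \<le> ?bound")
proof -
  define D where "D = Sigma (Un_set n) (\<lambda>zs. theta_index n s (z(s := zs)))"
  define Q where "Q q = theta_term s \<alpha> \<beta> q powr lam" for q
  have finite_le: "(\<Sum>(zs, q)\<in>F. Q q) \<le> ?bound" if "finite F" "F \<subseteq> D" for F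
    using sum_theta_index_le[OF n p s that[unfolded D_def]] by (simp add: Q_def split_def powr_theta_term)
  have summable: "(\<lambda>(zs, q). Q q) summable_on D"
  proof (rule nonneg_bdd_above_summable_on)
    show "bdd_above (sum (\<lambda>(zs, q). Q q) ` {F. F \<subseteq> D \<and> finite F})"
      by (rule bdd_aboveI[of _ ?bound]) (use finite_le in blast)
  qed (auto simp: Q_def)
  have theta_le: "theta n s \<alpha> (z(s := zs)) \<beta> powr lam \<le> infsum Q (theta_index n s (z(s := zs)))"
    if "zs \<in> Un_set n" for zs
  proof -
    have "Q summable_on theta_index n s (z(s := zs))"
      using summable_on_SigmaD1[of "\<lambda>zs q. Q q", OF summable[unfolded D_def] that] by simp
    then show ?thesis
      unfolding theta_eq_infsum Q_def using theta_term_nonneg[OF \<beta>] lam by (intro infsum_powr_le) auto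
  qed
  have "(\<Sum>zs\<in>Un_set n. theta n s \<alpha> (z(s := zs)) \<beta> powr lam)
      \<le> (\<Sum>zs\<in>Un_set n. infsum Q (theta_index n s (z(s := zs))))"
    by (intro sum_mono theta_le)
  also have "\<dots> = infsum (\<lambda>(zs, q). Q q) D"
    using infsum_Sigma_banach[OF summable[unfolded D_def]] by (simp add: D_def finite_Un_set)
  also have "\<dots> \<le> ?bound"
    by (rule infsum_le_finite_sums[OF summable finite_le])
  finally show ?thesis .
qed

theorem lemma3:
  fixes n s :: nat and \<alpha> lam :: real and \<beta> :: "nat set \<Rightarrow> real" and z :: "nat \<Rightarrow> int"
  assumes "n \<ge> 2" and "\<alpha> > 1" and "s \<ge> 1"
    and "\<And>u. u \<subseteq> {1..s} \<Longrightarrow> \<beta> u \<ge> 0"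
    and "\<And>j. j \<in> {1..s-1} \<Longrightarrow> z j \<in> Un_set n"
    and "1 / \<alpha> < lam" and "lam \<le> 1"
  shows "(1 / real (totient n)) * (\<Sum>zs\<in>Un_set n. (theta n s \<alpha> (z(s := zs)) \<beta>) powr lam)
     \<le> ((2 powr (2 * \<alpha> * lam + 1) + 1) / real (totient n)) *
        (\<Sum>u\<in>{u. u \<subseteq> {1..s} \<and> s \<in> u}. \<beta> u powr lam * (2 * zeta_real (\<alpha> * lam)) ^ card u) *
        (\<Sum>u\<in>{u. u \<subseteq> {1..s}}. \<beta> u powr lam * (2 * zeta_real (\<alpha> * lam)) ^ card u)"
proof -
  have "\<alpha> * lam > 1" using assms(2,6) by (simp add: field_simps)
  moreover have "lam > 0" using assms(2,6) by (smt (verit) divide_pos_pos)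
  ultimately have "(\<Sum>zs\<in>Un_set n. theta n s \<alpha> (z(s := zs)) \<beta> powr lam) / real (totient n)
      \<le> (2 powr (2 * (\<alpha> * lam) + 1) + 1)
        * (\<Sum>u\<in>{u. u \<subseteq> {1..s} \<and> s \<in> u}. \<beta> u powr lam * (2 * zeta_real (\<alpha> * lam)) ^ card u)
        * (\<Sum>u\<in>{u. u \<subseteq> {1..s}}. \<beta> u powr lam * (2 * zeta_real (\<alpha> * lam)) ^ card u)
        / real (totient n)"
    using assms(1,3,4,7) by (intro divide_right_mono sum_theta_powr_le) auto
  then show ?thesis by (simp add: mult.assoc)
qed

end
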